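(* Let $(V,\langle\cdot,\cdot\rangle)$ be a pseudo-Euclidean real vector space of signature $(k,l)$ with $k\ge2$, $l\ge2$, and let $Z\subseteq V$ be a subspace with $q^+(Z)\ge1$. Then the following are equivalent: (i) $q^+(Z^\perp)=0$; (ii) every positive $(k-1)$-plane $H\subseteq V$ which is $Z$-extendable is also $Z$-orthogonally-extendable.
   Context: A pseudo-Euclidean space of signature $(k,l)$ is a finite-dimensional real vector space with a symmetric non-degenerate bilinear form whose Sylvester diagonal form has $k$ entries $+1$ and $l$ entries $-1$. For a subspace $L$, $q^+(L)$ denotes the number of $+1$'s in a diagonalization of the restriction of the form to $L$ (the maximal dimension of a positive definite subspace of $L$), and $L^\perp$ is the orthogonal complement. A positive $r$-plane is an $r$-dimensional subspace on which the form is positive definite. For a subspace $Z$ and a positive $(k-1)$-plane $H$: $H$ is $Z$-extendable if there is $z\in Z$ with $H+\mathbb{R}z$ a positive $k$-plane; $H$ is $Z$-orthogonally-extendable if there is $z\in Z\cap H^\perp$ with $H+\mathbb{R}z$ a positive $k$-plane. *)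

theory Defs
  imports "HOL-Analysis.Analysis"
begin

text \<open>A pseudo-Euclidean structure on a finite-dimensional real vector space 'a
 (modelled by a type of class euclidean_space; only its vector space structure
 is used): a symmetric non-degenerate bilinear form B of signature (k,l),
 i.e. admitting a B-orthogonal basis with k vectors of square +1 and l
 vectors of square -1 (Sylvester diagonal form).\<close>

definition sym_form :: "('a \<Rightarrow> 'a \<Rightarrow> real) \<Rightarrow> bool" where
  "sym_form B \<longleftrightarrow> (\<forall>x y. B x y = B y x)"

definition nondegenerate :: "('a::real_vector \<Rightarrow> 'a \<Rightarrow> real) \<Rightarrow> bool" where
  "nondegenerate B \<longleftrightarrow> (\<forall>x. (\<forall>y. B x y = 0) \<longrightarrow> x = 0)"

definition has_signature :: "('a::euclidean_space \<Rightarrow> 'a \<Rightarrow> real) \<Rightarrow> nat \<Rightarrow> nat \<Rightarrow> bool" where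
  "has_signature B k l \<longleftrightarrow>
     (\<exists>S. independent S \<and> span S = UNIV \<and>
          (\<forall>u\<in>S. \<forall>v\<in>S. u \<noteq> v \<longrightarrow> B u v = 0) \<and>
          (\<forall>v\<in>S. B v v = 1 \<or> B v v = -1) \<and>
          card {v\<in>S. B v v = 1} = k \<and> card {v\<in>S. B v v = -1} = l)"

definition pseudo_euclidean :: "('a::euclidean_space \<Rightarrow> 'a \<Rightarrow> real) \<Rightarrow> nat \<Rightarrow> nat \<Rightarrow> bool" where
  "pseudo_euclidean B k l \<longleftrightarrow> bilinear B \<and> sym_form B \<and> nondegenerate B \<and> has_signature B k l"

definition pos_def_on :: "('a::real_vector \<Rightarrow> 'a \<Rightarrow> real) \<Rightarrow> 'a set \<Rightarrow> bool" where
  "pos_def_on B L \<longleftrightarrow> (\<forall>x\<in>L. x \<noteq> 0 \<longrightarrow> B x x > 0)"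

definition q_plus :: "('a::euclidean_space \<Rightarrow> 'a \<Rightarrow> real) \<Rightarrow> 'a set \<Rightarrow> nat" where
  "q_plus B L = Max {dim W | W. subspace W \<and> W \<subseteq> L \<and> pos_def_on B W}"

definition orth_compl :: "('a \<Rightarrow> 'a \<Rightarrow> real) \<Rightarrow> 'a set \<Rightarrow> 'a set" where
  "orth_compl B Z = {v. \<forall>z\<in>Z. B v z = 0}"

definition positive_plane :: "('a::euclidean_space \<Rightarrow> 'a \<Rightarrow> real) \<Rightarrow> nat \<Rightarrow> 'a set \<Rightarrow> bool" where
  "positive_plane B r H \<longleftrightarrow> subspace H \<and> dim H = r \<and> pos_def_on B H"

definition line_ext :: "'a::real_vector set \<Rightarrow> 'a \<Rightarrow> 'a set" where
  "line_ext H z = {h + c *\<^sub>R z | h c. h \<in> H}"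

definition Z_extendable :: "('a::euclidean_space \<Rightarrow> 'a \<Rightarrow> real) \<Rightarrow> nat \<Rightarrow> 'a set \<Rightarrow> 'a set \<Rightarrow> bool" where
  "Z_extendable B k Z H \<longleftrightarrow> (\<exists>z\<in>Z. positive_plane B k (line_ext H z))"

definition Z_orth_extendable :: "('a::euclidean_space \<Rightarrow> 'a \<Rightarrow> real) \<Rightarrow> nat \<Rightarrow> 'a set \<Rightarrow> 'a set \<Rightarrow> bool" where
  "Z_orth_extendable B k Z H \<longleftrightarrow> (\<exists>z\<in>Z \<inter> orth_compl B H. positive_plane B k (line_ext H z))"

end

theory Submission
  imports Defs
begin

text \<open>Write \<open>C = Z\<^sup>\<perp>\<close>. Suppose \<open>C\<close> is negative semidefinite, \<open>H + \<real>z\<close> with \<open>z \<in> Z\<close> is a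
positive \<open>k\<close>-plane, and no vector of \<open>A = Z \<inter> H\<^sup>\<perp>\<close> is positive. A vector of \<open>A \<inter> C\<close> is
isotropic and orthogonal to the maximal positive plane \<open>H + \<real>z\<close>, hence zero; so \<open>A + C\<close> is a direct
sum of two orthogonal nonpositive subspaces and has dimension at most \<open>l\<close>. But
\<open>dim A \<ge> dim Z - (k - 1)\<close> and \<open>dim C \<ge> k + l - dim Z\<close>.

Conversely, given a positive \<open>p \<in> C\<close>, take a maximal positive subspace \<open>Z\<^sub>+\<close> of \<open>Z\<close>, some
\<open>0 \<noteq> z \<in> Z\<^sub>+\<close>, a positive \<open>k\<close>-plane \<open>P \<supseteq> Z\<^sub>+ + \<real>p\<close> and \<open>H = P \<inter> (p - z)\<^sup>\<perp>\<close>. Then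
\<open>P = H + \<real>z = H + \<real>p\<close>: so \<open>H\<close> is \<open>Z\<close>-extendable, while an orthogonal extension \<open>x \<in> Z \<inter> H\<^sup>\<perp>\<close>
would be orthogonal to \<open>H + \<real>p = P \<supseteq> Z\<^sub>+\<close> and enlarge \<open>Z\<^sub>+\<close>.\<close>

lemmas bilinear_eqs =
  bilinear_ladd bilinear_radd bilinear_lmul bilinear_rmul
  bilinear_lsub bilinear_rsub bilinear_lzero bilinear_rzero

lemma bilinear_sum_diagonal:
  fixes B :: "'a::real_vector \<Rightarrow> 'a \<Rightarrow> real"
  assumes B: "bilinear B" and fin: "finite T"
    and orth: "\<And>u v. u \<in> T \<Longrightarrow> v \<in> T \<Longrightarrow> u \<noteq> v \<Longrightarrow> B u v = 0"
  shows "B (\<Sum>v\<in>T. c v *\<^sub>R v) (\<Sum>v\<in>T. c v *\<^sub>R v) = (\<Sum>v\<in>T. (c v)\<^sup>2 * B v v)"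
proof -
  have "B (\<Sum>v\<in>T. c v *\<^sub>R v) (\<Sum>v\<in>T. c v *\<^sub>R v)
      = (\<Sum>(i,j)\<in>T\<times>T. B (c i *\<^sub>R i) (c j *\<^sub>R j))"
    by (rule bilinear_sum[OF B])
  also have "\<dots> = (\<Sum>i\<in>T. \<Sum>j\<in>T. c i * c j * B i j)"
    by (simp add: sum.cartesian_product bilinear_lmul[OF B] bilinear_rmul[OF B] mult_ac)
  also have "\<dots> = (\<Sum>i\<in>T. c i * c i * B i i)"
  proof (rule sum.cong[OF refl])
    fix i assume i: "i \<in> T"
    have "\<forall>j\<in>T-{i}. c i * c j * B i j = 0" using orth i by auto
    then show "(\<Sum>j\<in>T. c i * c j * B i j) = c i * c i * B i i"
      by (subst sum.remove[OF fin i]) (auto intro!: sum.neutral)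
  qed
  finally show ?thesis by (simp add: power2_eq_square)
qed

lemma orthogonal_span_definite:
  fixes B :: "'a::real_vector \<Rightarrow> 'a \<Rightarrow> real"
  assumes B: "bilinear B" and fin: "finite T"
    and orth: "\<And>u v. u \<in> T \<Longrightarrow> v \<in> T \<Longrightarrow> u \<noteq> v \<Longrightarrow> B u v = 0"
    and diag: "\<And>v. v \<in> T \<Longrightarrow> B v v = s" and "s \<noteq> 0"
    and x: "x \<in> span T" "x \<noteq> 0"
  shows "s * B x x > 0"
proof -
  obtain c where x_eq: "x = (\<Sum>v\<in>T. c v *\<^sub>R v)" using x(1) span_finite[OF fin] by auto
  have "B x x = (\<Sum>v\<in>T. (c v)\<^sup>2 * s)"
    using bilinear_sum_diagonal[OF B fin orth, of c] diag unfolding x_eq by simp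
  then have "s * B x x = (\<Sum>v\<in>T. (c v)\<^sup>2 * s\<^sup>2)"
    by (simp add: sum_distrib_left mult_ac power2_eq_square)
  moreover have "\<exists>v\<in>T. c v \<noteq> 0"
  proof (rule ccontr)
    assume "\<not> (\<exists>v\<in>T. c v \<noteq> 0)"
    then have "x = 0" unfolding x_eq by simp
    with x(2) show False by contradiction
  qed
  then obtain v where "v \<in> T" "c v \<noteq> 0" ..
  then have "0 < (\<Sum>v\<in>T. (c v)\<^sup>2 * s\<^sup>2)"
    using \<open>s \<noteq> 0\<close> by (intro sum_pos2[OF fin]) auto
  ultimately show ?thesis by simp
qed

lemma subspace_orth_compl:
  fixes B :: "'a::real_vector \<Rightarrow> 'a \<Rightarrow> real"
  assumes "bilinear B"
  shows "subspace (orth_compl B X)"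
  unfolding orth_compl_def subspace_def using bilinear_eqs[OF assms] by auto

lemma line_ext_eq_span:
  assumes "subspace H"
  shows "line_ext H z = span (insert z H)"
proof -
  have "x \<in> line_ext H z \<longleftrightarrow> (\<exists>c. x - c *\<^sub>R z \<in> H)" for x
  proof
    assume "x \<in> line_ext H z"
    then obtain h c where "x = h + c *\<^sub>R z" "h \<in> H" unfolding line_ext_def by auto
    then have "x - c *\<^sub>R z \<in> H" by simp
    then show "\<exists>c. x - c *\<^sub>R z \<in> H" ..
  next
    assume "\<exists>c. x - c *\<^sub>R z \<in> H"
    then obtain c where "x - c *\<^sub>R z \<in> H" ..
    then show "x \<in> line_ext H z" unfolding line_ext_def by (auto intro!: exI[of _ "x - c *\<^sub>R z"])
  qed
  then show ?thesis
    unfolding span_insert span_eq_iff[THEN iffD2, OF assms] by auto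
qed

lemma
  fixes H :: "'a::euclidean_space set"
  assumes "subspace H"
  shows subspace_line_ext: "subspace (line_ext H z)"
    and subset_line_ext: "H \<subseteq> line_ext H z"
    and line_ext_in: "z \<in> line_ext H z"
    and dim_line_ext: "dim (line_ext H z) = (if z \<in> H then dim H else dim H + 1)"
proof -
  have span_H: "span H = H" using assms by simp
  show "subspace (line_ext H z)" "H \<subseteq> line_ext H z" "z \<in> line_ext H z"
    "dim (line_ext H z) = (if z \<in> H then dim H else dim H + 1)"
    using assms dim_insert[of z H] by (auto simp: line_ext_eq_span span_H intro: span_base)
qed

lemma line_ext_subset:
  assumes "subspace P" "H \<subseteq> P" "z \<in> P"
  shows "line_ext H z \<subseteq> P"
  using assms unfolding line_ext_def by (auto intro!: subspace_add subspace_mul)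

lemma orth_compl_line_ext:
  fixes B :: "'a::real_vector \<Rightarrow> 'a \<Rightarrow> real"
  assumes "bilinear B" "x \<in> orth_compl B H" "B x v = 0"
  shows "x \<in> orth_compl B (line_ext H v)"
  using assms unfolding orth_compl_def line_ext_def by (auto simp: bilinear_eqs)

lemma positive_plane_line_ext:
  fixes B :: "'a::euclidean_space \<Rightarrow> 'a \<Rightarrow> real"
  assumes B: "bilinear B" and sym: "sym_form B" and H: "subspace H" "pos_def_on B H"
    and x: "x \<in> orth_compl B H" "B x x > 0"
  shows "positive_plane B (dim H + 1) (line_ext H x)"
proof -
  have "x \<notin> H" using x unfolding orth_compl_def by force
  moreover have "pos_def_on B (line_ext H x)"
    unfolding pos_def_on_def
  proof (intro ballI impI)
    fix y assume "y \<in> line_ext H x" "y \<noteq> 0"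
    then obtain h c where y: "y = h + c *\<^sub>R x" "h \<in> H" unfolding line_ext_def by auto
    have "B h x = 0" "B x h = 0"
      using x(1) y(2) sym unfolding orth_compl_def sym_form_def by auto
    then have "B y y = B h h + c\<^sup>2 * B x x"
      unfolding y by (simp add: bilinear_eqs[OF B] power2_eq_square)
    moreover have "h = 0 \<Longrightarrow> c \<noteq> 0" using y \<open>y \<noteq> 0\<close> by auto
    moreover have "h \<noteq> 0 \<Longrightarrow> B h h > 0" using H(2) y(2) unfolding pos_def_on_def by auto
    ultimately show "0 < B y y"
      using x(2) bilinear_lzero[OF B] by (cases "h = 0") (auto intro: add_pos_nonneg)
  qed
  ultimately show ?thesis
    unfolding positive_plane_def using subspace_line_ext[OF H(1)] dim_line_ext[OF H(1)] by auto
qed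

lemma
  fixes B :: "'a::euclidean_space \<Rightarrow> 'a \<Rightarrow> real"
  assumes B: "bilinear B" and P: "subspace P" and "v \<in> P" and v: "B v u \<noteq> 0"
  shows line_ext_hyperplane: "line_ext (P \<inter> orth_compl B {u}) v = P"
    and dim_hyperplane: "dim (P \<inter> orth_compl B {u}) + 1 = dim P"
proof -
  let ?H = "P \<inter> orth_compl B {u}"
  have H: "subspace ?H" by (rule subspace_inter[OF P subspace_orth_compl[OF B]])
  show line_ext: "line_ext ?H v = P"
  proof
    show "line_ext ?H v \<subseteq> P" by (rule line_ext_subset[OF P _ \<open>v \<in> P\<close>]) auto
  next
    show "P \<subseteq> line_ext ?H v"
    proof
      fix y assume "y \<in> P"
      define c where "c = B y u / B v u"
      have "y - c *\<^sub>R v \<in> ?H"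
        using \<open>y \<in> P\<close> \<open>v \<in> P\<close> P v
        by (auto simp: c_def orth_compl_def bilinear_eqs[OF B] subspace_diff subspace_mul)
      moreover have "y = (y - c *\<^sub>R v) + c *\<^sub>R v" by simp
      ultimately show "y \<in> line_ext ?H v" unfolding line_ext_def by blast
    qed
  qed
  have "v \<notin> ?H" using v by (auto simp: orth_compl_def)
  then show "dim ?H + 1 = dim P" using dim_line_ext[OF H, of v] line_ext by simp
qed

lemma dim_le_dim_Int_orth_compl_vector:
  fixes B :: "'a::euclidean_space \<Rightarrow> 'a \<Rightarrow> real"
  assumes "bilinear B" "subspace W"
  shows "dim W \<le> dim (W \<inter> orth_compl B {u}) + 1"
proof (cases "\<exists>v\<in>W. B v u \<noteq> 0")
  case True
  then show ?thesis using dim_hyperplane[OF assms] by force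
next
  case False
  then have "W \<inter> orth_compl B {u} = W" by (auto simp: orth_compl_def)
  then show ?thesis by simp
qed

lemma dim_le_dim_Int_orth_compl_finite:
  fixes B :: "'a::euclidean_space \<Rightarrow> 'a \<Rightarrow> real"
  assumes B: "bilinear B" and "finite T" and Y: "subspace Y"
  shows "dim Y \<le> dim (Y \<inter> orth_compl B T) + card T"
  using \<open>finite T\<close>
proof (induction T rule: finite_induct)
  case empty
  then show ?case by (simp add: orth_compl_def)
next
  case (insert a T)
  let ?W = "Y \<inter> orth_compl B T"
  have "subspace ?W" by (rule subspace_inter[OF Y subspace_orth_compl[OF B]])
  then have "dim ?W \<le> dim (?W \<inter> orth_compl B {a}) + 1"
    by (rule dim_le_dim_Int_orth_compl_vector[OF B])
  moreover have "?W \<inter> orth_compl B {a} = Y \<inter> orth_compl B (insert a T)"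
    by (auto simp: orth_compl_def)
  ultimately show ?case using insert by simp
qed

lemma dim_le_dim_Int_orth_compl:
  fixes B :: "'a::euclidean_space \<Rightarrow> 'a \<Rightarrow> real"
  assumes B: "bilinear B" and Y: "subspace Y"
  shows "dim Y \<le> dim (Y \<inter> orth_compl B X) + dim X"
proof -
  obtain T where T: "T \<subseteq> X" "independent T" "X \<subseteq> span T" "card T = dim X"
    using basis_exists by blast
  have "orth_compl B T \<subseteq> orth_compl B X"
  proof
    fix x assume "x \<in> orth_compl B T"
    moreover have "subspace {y. B x y = 0}"
      unfolding subspace_def using bilinear_eqs[OF B] by auto
    ultimately have "span T \<subseteq> {y. B x y = 0}"
      by (intro span_minimal) (auto simp: orth_compl_def)
    then show "x \<in> orth_compl B X" using T(3) unfolding orth_compl_def by auto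
  qed
  then have "dim (Y \<inter> orth_compl B T) \<le> dim (Y \<inter> orth_compl B X)"
    by (intro dim_subset) auto
  moreover have "dim Y \<le> dim (Y \<inter> orth_compl B T) + card T"
    using T(2) finiteI_independent by (intro dim_le_dim_Int_orth_compl_finite[OF B _ Y]) blast
  ultimately show ?thesis using T(4) by simp
qed

corollary DIM_le_dim_orth_compl:
  fixes B :: "'a::euclidean_space \<Rightarrow> 'a \<Rightarrow> real"
  assumes "bilinear B"
  shows "DIM('a) \<le> dim (orth_compl B X) + dim X"
  using dim_le_dim_Int_orth_compl[OF assms subspace_UNIV, of X] by simp

lemma dim_add_le_DIM:
  fixes A C :: "'a::euclidean_space set"
  assumes "subspace A" "subspace C" "A \<inter> C \<subseteq> {0}"
  shows "dim A + dim C \<le> DIM('a)"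
proof -
  have "dim (A \<inter> C) = 0" using assms(3) by simp
  then show ?thesis
    using dim_sums_Int[OF assms(1,2)] dim_subset_UNIV[of "{x + y |x y. x \<in> A \<and> y \<in> C}"]
    by linarith
qed

lemma finite_positive_dims:
  fixes B :: "'a::euclidean_space \<Rightarrow> 'a \<Rightarrow> real"
  shows "finite {dim W |W. subspace W \<and> W \<subseteq> L \<and> pos_def_on B W}"
  by (rule finite_subset[of _ "{..DIM('a)}"]) (auto simp: dim_subset_UNIV)

lemma q_plus_ge:
  fixes B :: "'a::euclidean_space \<Rightarrow> 'a \<Rightarrow> real"
  assumes "subspace W" "W \<subseteq> L" "pos_def_on B W"
  shows "dim W \<le> q_plus B L"
  unfolding q_plus_def using assms by (intro Max_ge[OF finite_positive_dims]) auto

lemma q_plus_witness: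
  fixes B :: "'a::euclidean_space \<Rightarrow> 'a \<Rightarrow> real"
  assumes "subspace L"
  obtains W where "subspace W" "W \<subseteq> L" "pos_def_on B W" "dim W = q_plus B L"
proof -
  let ?D = "{dim W |W. subspace W \<and> W \<subseteq> L \<and> pos_def_on B W}"
  have "dim {0::'a} \<in> ?D"
    using subspace_0[OF assms] by (auto simp: pos_def_on_def)
  then have "q_plus B L \<in> ?D"
    unfolding q_plus_def by (intro Max_in[OF finite_positive_dims]) auto
  then show ?thesis using that by auto
qed

lemma q_plus_eq_0_iff:
  fixes B :: "'a::euclidean_space \<Rightarrow> 'a \<Rightarrow> real"
  assumes B: "bilinear B" and sym: "sym_form B" and L: "subspace L"
  shows "q_plus B L = 0 \<longleftrightarrow> (\<forall>x\<in>L. B x x \<le> 0)"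
proof
  assume q: "q_plus B L = 0"
  show "\<forall>x\<in>L. B x x \<le> 0"
  proof (rule ccontr)
    assume "\<not> (\<forall>x\<in>L. B x x \<le> 0)"
    then obtain x where x: "x \<in> L" "B x x > 0" by force
    have "positive_plane B (dim {0::'a} + 1) (line_ext {0} x)"
      using x by (intro positive_plane_line_ext[OF B sym])
        (auto simp: pos_def_on_def orth_compl_def bilinear_eqs[OF B])
    moreover have "line_ext {0} x \<subseteq> L"
      using L x subspace_0[OF L] by (intro line_ext_subset) auto
    ultimately have "1 \<le> q_plus B L" using q_plus_ge unfolding positive_plane_def by fastforce
    with q show False by simp
  qed
next
  assume "\<forall>x\<in>L. B x x \<le> 0"
  moreover obtain W where W: "subspace W" "W \<subseteq> L" "pos_def_on B W" "dim W = q_plus B L"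
    using q_plus_witness[OF L] by blast
  ultimately have "W \<subseteq> {0}" unfolding pos_def_on_def by force
  then show "q_plus B L = 0" using W(4) dim_eq_0 by metis
qed

lemma pos_def_on_nonneg:
  fixes B :: "'a::real_vector \<Rightarrow> 'a \<Rightarrow> real"
  assumes "bilinear B" "pos_def_on B Y" "y \<in> Y"
  shows "B y y \<ge> 0"
  using assms bilinear_lzero[OF assms(1)] unfolding pos_def_on_def by (cases "y = 0") auto

locale pseudo_euclidean_space =
  fixes B :: "'a::euclidean_space \<Rightarrow> 'a \<Rightarrow> real" and k l :: nat
  assumes pseudo_euclidean: "pseudo_euclidean B k l"
begin

lemma bilinear: "bilinear B"
  and sym: "sym_form B"
  using pseudo_euclidean unfolding pseudo_euclidean_def by auto

lemma symmetric: "B x y = B y x"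
  using sym unfolding sym_form_def by auto

lemma signature_subspaces:
  obtains Ep En where "subspace Ep" "subspace En" "dim Ep = k" "dim En = l"
    "pos_def_on B Ep" "\<And>x. x \<in> En \<Longrightarrow> x \<noteq> 0 \<Longrightarrow> B x x < 0" and "k + l = DIM('a)"
proof -
  obtain S where ind: "independent S" and span_S: "span S = UNIV"
    and orth: "\<forall>u\<in>S. \<forall>v\<in>S. u \<noteq> v \<longrightarrow> B u v = 0"
    and pm: "\<forall>v\<in>S. B v v = 1 \<or> B v v = -1"
    and card_k: "card {v\<in>S. B v v = 1} = k" and card_l: "card {v\<in>S. B v v = -1} = l"
    using pseudo_euclidean unfolding pseudo_euclidean_def has_signature_def by blast
  define Sp where "Sp = {v\<in>S. B v v = 1}"
  define Sn where "Sn = {v\<in>S. B v v = -1}"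
  have fin: "finite S" using ind finiteI_independent by blast
  have ind_pn: "independent Sp" "independent Sn"
    using independent_mono[OF ind] unfolding Sp_def Sn_def by auto
  have "S = Sp \<union> Sn" "Sp \<inter> Sn = {}" using pm unfolding Sp_def Sn_def by auto
  then have "card S = k + l"
    using fin card_k card_l unfolding Sp_def[symmetric] Sn_def[symmetric] by (simp add: card_Un_disjoint)
  moreover have "card S = DIM('a)"
    using dim_span_eq_card_independent[OF ind] span_S by simp
  ultimately have kl: "k + l = DIM('a)" by simp
  show ?thesis
  proof (rule that[of "span Sp" "span Sn"])
    show "dim (span Sp) = k" "dim (span Sn) = l"
      using dim_span_eq_card_independent[OF ind_pn(1)] dim_span_eq_card_independent[OF ind_pn(2)]
        card_k card_l unfolding Sp_def Sn_def by auto
    have "finite Sp" "finite Sn" using fin unfolding Sp_def Sn_def by auto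
    have orth_p: "\<And>u v. u \<in> Sp \<Longrightarrow> v \<in> Sp \<Longrightarrow> u \<noteq> v \<Longrightarrow> B u v = 0"
      and orth_n: "\<And>u v. u \<in> Sn \<Longrightarrow> v \<in> Sn \<Longrightarrow> u \<noteq> v \<Longrightarrow> B u v = 0"
      and diag_p: "\<And>v. v \<in> Sp \<Longrightarrow> B v v = 1" and diag_n: "\<And>v. v \<in> Sn \<Longrightarrow> B v v = -1"
      using orth unfolding Sp_def Sn_def by auto
    show "pos_def_on B (span Sp)"
      unfolding pos_def_on_def
    proof (intro ballI impI)
      fix x assume "x \<in> span Sp" "x \<noteq> 0"
      have "1 * B x x > 0"
        by (rule orthogonal_span_definite[OF bilinear \<open>finite Sp\<close>])
          (use orth_p diag_p \<open>x \<in> span Sp\<close> \<open>x \<noteq> 0\<close> in auto)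
      then show "B x x > 0" by simp
    qed
    show "B x x < 0" if "x \<in> span Sn" "x \<noteq> 0" for x
    proof -
      have "-1 * B x x > 0"
        by (rule orthogonal_span_definite[OF bilinear \<open>finite Sn\<close>])
          (use orth_n diag_n that in auto)
      then show ?thesis by simp
    qed
  qed (use kl in auto)
qed

lemma k_add_l: "k + l = DIM('a)"
  by (rule signature_subspaces) blast

lemma dim_le_k_if_nonneg:
  assumes "subspace Y" "\<And>y. y \<in> Y \<Longrightarrow> B y y \<ge> 0"
  shows "dim Y \<le> k"
proof -
  obtain En where En: "subspace En" "dim En = l" "\<And>x. x \<in> En \<Longrightarrow> x \<noteq> 0 \<Longrightarrow> B x x < 0"
    by (rule signature_subspaces) blast
  have "Y \<inter> En \<subseteq> {0}" using assms(2) En(3) by force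
  then have "dim Y + dim En \<le> DIM('a)" by (rule dim_add_le_DIM[OF assms(1) En(1)])
  then show ?thesis using En(2) k_add_l by simp
qed

lemma dim_le_l_if_nonpos:
  assumes "subspace Y" "\<And>y. y \<in> Y \<Longrightarrow> B y y \<le> 0"
  shows "dim Y \<le> l"
proof -
  obtain Ep where Ep: "subspace Ep" "dim Ep = k" "pos_def_on B Ep"
    by (rule signature_subspaces) blast
  have "Y \<inter> Ep \<subseteq> {0}" using assms(2) Ep(3) unfolding pos_def_on_def by force
  then have "dim Y + dim Ep \<le> DIM('a)" by (rule dim_add_le_DIM[OF assms(1) Ep(1)])
  then show ?thesis using Ep(2) k_add_l by simp
qed

lemma orth_compl_positive_plane_negative:
  assumes P: "positive_plane B k P" and r: "r \<in> orth_compl B P" "r \<noteq> 0"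
  shows "B r r < 0"
proof (rule ccontr)
  \<comment> \<open>otherwise \<open>P + \<real>r\<close> would be a nonnegative subspace of dimension \<open>k + 1\<close>\<close>
  assume "\<not> B r r < 0"
  have sP: "subspace P" and dP: "dim P = k" and pP: "pos_def_on B P"
    using P unfolding positive_plane_def by auto
  have "r \<notin> P" using r pP unfolding orth_compl_def pos_def_on_def by force
  then have "dim (line_ext P r) = k + 1" using dim_line_ext[OF sP, of r] dP by simp
  moreover have "dim (line_ext P r) \<le> k"
  proof (rule dim_le_k_if_nonneg[OF subspace_line_ext[OF sP]])
    fix y assume "y \<in> line_ext P r"
    then obtain p c where y: "y = p + c *\<^sub>R r" "p \<in> P" unfolding line_ext_def by auto
    have "B r p = 0" "B p r = 0" using r(1) y(2) symmetric unfolding orth_compl_def by auto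
    then have "B y y = B p p + c\<^sup>2 * B r r"
      unfolding y by (simp add: bilinear_eqs[OF bilinear] power2_eq_square)
    then show "B y y \<ge> 0" using pos_def_on_nonneg[OF bilinear pP y(2)] \<open>\<not> B r r < 0\<close> by simp
  qed
  ultimately show False by simp
qed

lemma positive_plane_extension:
  assumes "subspace Q" "pos_def_on B Q"
  obtains P where "positive_plane B k P" "Q \<subseteq> P"
proof -
  have "\<exists>P. positive_plane B k P \<and> Q \<subseteq> P"
    using assms
  proof (induction "k - dim Q" arbitrary: Q)
    case 0
    then have "dim Q \<le> k" using dim_le_k_if_nonneg pos_def_on_nonneg[OF bilinear] by blast
    then show ?case using 0 unfolding positive_plane_def by auto
  next
    case (Suc m)
    have "DIM('a) \<le> dim (orth_compl B Q) + dim Q" by (rule DIM_le_dim_orth_compl[OF bilinear])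
    then have "\<not> dim (orth_compl B Q) \<le> l" using Suc.hyps k_add_l by linarith
    then obtain v where v: "v \<in> orth_compl B Q" "B v v > 0"
      using dim_le_l_if_nonpos[OF subspace_orth_compl[OF bilinear]] by force
    have "positive_plane B (dim Q + 1) (line_ext Q v)"
      by (rule positive_plane_line_ext[OF bilinear sym Suc.prems v])
    then have "k - dim (line_ext Q v) = m" "subspace (line_ext Q v)" "pos_def_on B (line_ext Q v)"
      using Suc.hyps unfolding positive_plane_def by auto
    then show ?case using Suc.hyps(1) subset_line_ext[OF Suc.prems(1)] by blast
  qed
  then show ?thesis using that by blast
qed

lemma orth_extendable_if_orth_compl_nonpositive:
  assumes Z: "subspace Z" and C: "\<And>x. x \<in> orth_compl B Z \<Longrightarrow> B x x \<le> 0"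
    and H: "positive_plane B (k - 1) H" and ext: "Z_extendable B k Z H" and "k \<ge> 1"
  shows "Z_orth_extendable B k Z H"
proof (rule ccontr)
  assume not_orth_ext: "\<not> Z_orth_extendable B k Z H"
  have sH: "subspace H" and dH: "dim H = k - 1" and pH: "pos_def_on B H"
    using H unfolding positive_plane_def by auto
  obtain z where z: "z \<in> Z" "positive_plane B k (line_ext H z)"
    using ext unfolding Z_extendable_def by blast
  define A where "A = Z \<inter> orth_compl B H"
  define C where "C = orth_compl B Z"
  have sA: "subspace A" unfolding A_def by (rule subspace_inter[OF Z subspace_orth_compl[OF bilinear]])
  have sC: "subspace C" unfolding C_def by (rule subspace_orth_compl[OF bilinear])
  have orth_AC: "B a c = 0" "B c a = 0" if "a \<in> A" "c \<in> C" for a c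
    using that symmetric unfolding A_def C_def orth_compl_def by auto
  have A_nonpos: "B x x \<le> 0" if "x \<in> A" for x
  proof (rule ccontr)
    assume "\<not> B x x \<le> 0"
    then have "positive_plane B (dim H + 1) (line_ext H x)"
      using that by (intro positive_plane_line_ext[OF bilinear sym sH pH]) (auto simp: A_def)
    then show False using not_orth_ext that dH \<open>k \<ge> 1\<close> unfolding Z_orth_extendable_def A_def by auto
  qed
  have "A \<inter> C \<subseteq> {0}"
  proof
    fix r assume "r \<in> A \<inter> C"
    then have "r \<in> A" "r \<in> C" by auto
    then have "B r r = 0" using orth_AC by blast
    have "B r z = 0" using \<open>r \<in> C\<close> z(1) unfolding C_def orth_compl_def by blast
    moreover have "r \<in> orth_compl B H" using \<open>r \<in> A\<close> unfolding A_def by blast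
    ultimately have "r \<in> orth_compl B (line_ext H z)" by (intro orth_compl_line_ext[OF bilinear])
    then show "r \<in> {0}"
      using orth_compl_positive_plane_negative[OF z(2)] \<open>B r r = 0\<close> by fastforce
  qed
  define S where "S = {a + c |a c. a \<in> A \<and> c \<in> C}"
  have "dim (A \<inter> C) = 0" using \<open>A \<inter> C \<subseteq> {0}\<close> dim_eq_0 by blast
  then have "dim S = dim A + dim C"
    using dim_sums_Int[OF sA sC] unfolding S_def by linarith
  moreover have "dim S \<le> l"
  proof (rule dim_le_l_if_nonpos)
    show "subspace S" unfolding S_def by (rule subspace_sums[OF sA sC])
    fix y assume "y \<in> S"
    then obtain a c where y: "y = a + c" "a \<in> A" "c \<in> C" unfolding S_def by auto
    then have "B y y = B a a + B c c"
      using orth_AC[OF y(2,3)] by (simp add: bilinear_eqs[OF bilinear])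
    then show "B y y \<le> 0" using A_nonpos[OF y(2)] C[of c] y(3) unfolding C_def by simp
  qed
  moreover have "dim Z \<le> dim A + (k - 1)"
    using dim_le_dim_Int_orth_compl[OF bilinear Z, of H] dH unfolding A_def by simp
  moreover have "DIM('a) \<le> dim C + dim Z"
    unfolding C_def by (rule DIM_le_dim_orth_compl[OF bilinear])
  ultimately show False using k_add_l \<open>k \<ge> 1\<close> by linarith
qed

lemma not_orth_extendable_if_orth_compl_positive:
  assumes Z: "subspace Z" and "q_plus B Z \<ge> 1"
    and p: "p \<in> orth_compl B Z" "B p p > 0"
  obtains H where "positive_plane B (k - 1) H" "Z_extendable B k Z H" "\<not> Z_orth_extendable B k Z H"
proof -
  obtain Zp where Zp: "subspace Zp" "Zp \<subseteq> Z" "pos_def_on B Zp" "dim Zp = q_plus B Z"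
    using q_plus_witness[OF Z] by blast
  obtain z where z: "z \<in> Zp" "z \<noteq> 0"
    using Zp(4) \<open>q_plus B Z \<ge> 1\<close> dim_eq_0[of Zp] by auto
  have "z \<in> Z" "B z z > 0" using z Zp(2,3) unfolding pos_def_on_def by auto
  have "B p z = 0" using p(1) \<open>z \<in> Z\<close> unfolding orth_compl_def by auto
  have p_Zp: "p \<in> orth_compl B Zp" using p(1) Zp(2) unfolding orth_compl_def by auto
  have "positive_plane B (dim Zp + 1) (line_ext Zp p)"
    by (rule positive_plane_line_ext[OF bilinear sym Zp(1,3) p_Zp p(2)])
  then have "subspace (line_ext Zp p)" "pos_def_on B (line_ext Zp p)"
    unfolding positive_plane_def by auto
  then obtain P where P: "positive_plane B k P" "line_ext Zp p \<subseteq> P"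
    by (rule positive_plane_extension)
  have sP: "subspace P" and pP: "pos_def_on B P" using P(1) unfolding positive_plane_def by auto
  have "Zp \<subseteq> P" "p \<in> P" using P(2) subset_line_ext[OF Zp(1)] line_ext_in[OF Zp(1)] by blast+
  with z have "z \<in> P" by auto
  \<comment> \<open>\<open>H\<close> is chosen so that both \<open>z\<close> and \<open>p\<close> complement it in \<open>P\<close>\<close>
  define H where "H = P \<inter> orth_compl B {p - z}"
  have "B p (p - z) \<noteq> 0" "B z (p - z) \<noteq> 0"
    using p(2) \<open>B z z > 0\<close> \<open>B p z = 0\<close> symmetric[of z p] by (simp_all add: bilinear_eqs[OF bilinear])
  note hyperplane_p = line_ext_hyperplane[OF bilinear sP \<open>p \<in> P\<close> this(1), folded H_def]
    and hyperplane_z = line_ext_hyperplane[OF bilinear sP \<open>z \<in> P\<close> this(2), folded H_def]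
    and dim_H = dim_hyperplane[OF bilinear sP \<open>z \<in> P\<close> this(2), folded H_def]
  have sH: "subspace H" unfolding H_def by (rule subspace_inter[OF sP subspace_orth_compl[OF bilinear]])
  have H: "positive_plane B (k - 1) H"
    using sH dim_H pP P(1) unfolding positive_plane_def pos_def_on_def H_def by auto
  moreover have "Z_extendable B k Z H"
    using P(1) \<open>z \<in> Z\<close> hyperplane_z unfolding Z_extendable_def by auto
  moreover have "\<not> Z_orth_extendable B k Z H"
  proof
    assume "Z_orth_extendable B k Z H"
    then obtain x where x: "x \<in> Z" "x \<in> orth_compl B H" "positive_plane B k (line_ext H x)"
      unfolding Z_orth_extendable_def by blast
    have "x \<noteq> 0"
      using x(3) dim_line_ext[OF sH, of 0] subspace_0[OF sH] dim_H P(1)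
      unfolding positive_plane_def by auto
    then have "B x x > 0"
      using x(3) line_ext_in[OF sH] unfolding positive_plane_def pos_def_on_def by blast
    have "B x p = 0" using p(1) x(1) symmetric unfolding orth_compl_def by auto
    then have "x \<in> orth_compl B P"
      using orth_compl_line_ext[OF bilinear x(2)] hyperplane_p by auto
    then have "x \<in> orth_compl B Zp" using \<open>Zp \<subseteq> P\<close> unfolding orth_compl_def by auto
    then have "positive_plane B (dim Zp + 1) (line_ext Zp x)"
      by (rule positive_plane_line_ext[OF bilinear sym Zp(1,3) _ \<open>B x x > 0\<close>])
    moreover have "line_ext Zp x \<subseteq> Z" by (rule line_ext_subset[OF Z Zp(2) x(1)])
    ultimately have "dim Zp + 1 \<le> q_plus B Z"
      using q_plus_ge[of "line_ext Zp x" Z B] unfolding positive_plane_def by auto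
    then show False using Zp(4) by simp
  qed
  ultimately show ?thesis by (rule that)
qed

end

theorem proposition2:
  fixes B :: "'a::euclidean_space \<Rightarrow> 'a \<Rightarrow> real" and k l :: nat and Z :: "'a set"
  assumes "pseudo_euclidean B k l"
    and "k \<ge> 2" and "l \<ge> 2"
    and "subspace Z" and "q_plus B Z \<ge> 1"
  shows "q_plus B (orth_compl B Z) = 0 \<longleftrightarrow>
         (\<forall>H. positive_plane B (k - 1) H \<and> Z_extendable B k Z H \<longrightarrow> Z_orth_extendable B k Z H)"
proof -
  interpret pseudo_euclidean_space B k l
    by (rule pseudo_euclidean_space.intro) fact
  have "q_plus B (orth_compl B Z) = 0 \<longleftrightarrow> (\<forall>x\<in>orth_compl B Z. B x x \<le> 0)"
    by (rule q_plus_eq_0_iff[OF bilinear sym subspace_orth_compl[OF bilinear]])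
  also have "\<dots> \<longleftrightarrow>
      (\<forall>H. positive_plane B (k - 1) H \<and> Z_extendable B k Z H \<longrightarrow> Z_orth_extendable B k Z H)"
  proof (intro iffI allI impI ballI)
    fix H assume "\<forall>x\<in>orth_compl B Z. B x x \<le> 0"
      and "positive_plane B (k - 1) H \<and> Z_extendable B k Z H"
    then show "Z_orth_extendable B k Z H"
      using orth_extendable_if_orth_compl_nonpositive[OF \<open>subspace Z\<close>] \<open>k \<ge> 2\<close> by simp
  next
    fix p assume orth_ext: "\<forall>H. positive_plane B (k - 1) H \<and> Z_extendable B k Z H
        \<longrightarrow> Z_orth_extendable B k Z H"
      and "p \<in> orth_compl B Z"
    show "B p p \<le> 0"
    proof (rule ccontr)
      assume "\<not> B p p \<le> 0"
      then obtain H where "positive_plane B (k - 1) H" "Z_extendable B k Z H"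
          "\<not> Z_orth_extendable B k Z H"
        using not_orth_extendable_if_orth_compl_positive[OF \<open>subspace Z\<close> \<open>q_plus B Z \<ge> 1\<close>
            \<open>p \<in> orth_compl B Z\<close>] by force
      with orth_ext show False by blast
    qed
  qed
  finally show ?thesis .
qed

end
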